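(* Let $\mathbb{F}$ be a field, $d\geq 3$ an integer and $V$ a vector space over $\mathbb{F}$ of dimension $d+1$. Let $E^*_0,\dots,E^*_d$ be a system of mutually orthogonal idempotents in $\mathrm{End}(V)$, and let $A\in\mathrm{End}(V)$ satisfy $E^*_iAE^*_j=0$ if $|i-j|>1$ and $E^*_iAE^*_j\neq 0$ if $|i-j|=1$. Assume $A$ is multiplicity-free and bipartite, with primitive idempotents $E_0,\dots,E_d$ and corresponding eigenvalues $\theta_0,\dots,\theta_d$. Let $\theta^*_0,\dots,\theta^*_d\in\mathbb{F}$ and $A^*=\sum_i\theta^*_iE^*_i$. Assume $E_0$ is normalizing and that in $\Delta$ the vertex $E_0$ is adjacent to $E_1$ and to no other vertex. Then, with $a^*_0=\operatorname{tr}(E_0A^* )$, $$a^*_0=\frac{\theta_1\theta^*_0-\theta_0\theta^*_1}{\theta_1-\theta_0}=\frac{\theta_1\theta^*_d-\theta_0\theta^*_{d-1}}{\theta_1-\theta_0}.$$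
   Context: A system of mutually orthogonal idempotents is a sequence $E^*_0,\dots,E^*_d$ of linear maps $V\to V$ with $E^*_iE^*_j=\delta_{ij}E^*_i$ and $\operatorname{rank}E^*_i=1$. $A$ is multiplicity-free if it has $d+1$ mutually distinct eigenvalues in $\mathbb{F}$; the primitive idempotent $E_i$ for $\theta_i$ is the projection onto the $\theta_i$-eigenspace along the sum of the other eigenspaces. $A$ is bipartite if $\operatorname{tr}(E^*_iA)=0$ for all $i$. $\Delta$ is the graph whose vertices are $E_0,\dots,E_d$, with $E_i\neq E_j$ adjacent iff $E_iA^*E_j\neq 0$. For a basis $v_0,\dots,v_d$, the matrix $Y$ representing $A$ satisfies $Av_j=\sum_iY_{ij}v_i$. An eigenvalue $\theta$ of $A$ is normalizing if there is a basis $v_0,\dots,v_d$ of $V$ with $v_i\in E^*_iV$ such that every row of the matrix representing $A$ sums to $\theta$; $E_i$ is normalizing if $\theta_i$ is. *)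

theory Defs
  imports "Jordan_Normal_Form.Jordan_Normal_Form" "Jordan_Normal_Form.DL_Rank"
begin

text \<open>Endomorphisms of V = F^(d+1) are represented by (d+1) x (d+1) matrices.\<close>

definition mat_trace :: "'a::comm_ring_1 mat \<Rightarrow> 'a" where
  "mat_trace M = (\<Sum>i<dim_row M. M $$ (i, i))"

definition mat_lincomb :: "nat \<Rightarrow> nat \<Rightarrow> (nat \<Rightarrow> 'a::comm_ring_1) \<Rightarrow> (nat \<Rightarrow> 'a mat) \<Rightarrow> 'a mat" where
  "mat_lincomb n d c M = mat n n (\<lambda>(r, s). \<Sum>i\<le>d. c i * M i $$ (r, s))"

definition orth_idempotent_system :: "nat \<Rightarrow> nat \<Rightarrow> (nat \<Rightarrow> 'a::field mat) \<Rightarrow> bool" where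
  "orth_idempotent_system n d Es \<longleftrightarrow>
     (\<forall>i\<le>d. Es i \<in> carrier_mat n n \<and> vec_space.rank n (Es i) = 1) \<and>
     (\<forall>i\<le>d. \<forall>j\<le>d. Es i * Es j = (if i = j then Es i else 0\<^sub>m n n))"

definition primitive_idempotent :: "nat \<Rightarrow> 'a::field mat \<Rightarrow> 'a \<Rightarrow> 'a mat \<Rightarrow> bool" where
  "primitive_idempotent n A \<theta> M \<longleftrightarrow> M \<in> carrier_mat n n \<and>
     (\<forall>v \<in> carrier_vec n. A *\<^sub>v v = \<theta> \<cdot>\<^sub>v v \<longrightarrow> M *\<^sub>v v = v) \<and>
     (\<forall>v \<in> carrier_vec n. \<forall>\<mu>. \<mu> \<noteq> \<theta> \<and> A *\<^sub>v v = \<mu> \<cdot>\<^sub>v v \<longrightarrow> M *\<^sub>v v = 0\<^sub>v n)"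

text \<open>theta is normalizing: there is a basis v_0..v_d with v_i in E*_i V such that
  the matrix Y representing A in this basis (A v_j = sum_i Y_ij v_i, i.e. A P = P Y
  where P has columns v_0..v_d) has all row sums equal to theta.\<close>
definition normalizing :: "nat \<Rightarrow> (nat \<Rightarrow> 'a::field mat) \<Rightarrow> 'a mat \<Rightarrow> 'a \<Rightarrow> bool" where
  "normalizing d Es A \<theta> \<longleftrightarrow>
     (\<exists>v :: nat \<Rightarrow> 'a vec. \<exists>Y.
        (\<forall>i\<le>d. v i \<in> carrier_vec (d+1) \<and> (\<exists>w \<in> carrier_vec (d+1). v i = Es i *\<^sub>v w)) \<and>
        det (mat_of_cols (d+1) (map v [0..<d+1])) \<noteq> 0 \<and>
        Y \<in> carrier_mat (d+1) (d+1) \<and>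
        A * mat_of_cols (d+1) (map v [0..<d+1]) = mat_of_cols (d+1) (map v [0..<d+1]) * Y \<and>
        (\<forall>i\<le>d. (\<Sum>j\<le>d. Y $$ (i, j)) = \<theta>))"

end

theory Submission
  imports Defs
begin

text \<open>
  Let \<open>x\<^sub>0, \<dots>, x\<^sub>d\<close> be eigenvectors of \<open>A\<close> with dual rows \<open>y\<^sub>i\<close>, so that \<open>E\<^sub>i = x\<^sub>i y\<^sub>i\<^sup>T\<close>, and let
  \<open>v\<^sub>0, \<dots>, v\<^sub>d\<close> be the normalizing basis with \<open>v\<^sub>i \<in> E\<^sup>*\<^sub>iV\<close>, in which \<open>A\<close> is represented by a
  matrix \<open>Y\<close> that is tridiagonal with zero diagonal and nonzero off-diagonal entries.
  With \<open>R\<^sub>i\<^sub>k = y\<^sub>i v\<^sub>k\<close> and \<open>T\<^sub>i\<^sub>j = y\<^sub>i A\<^sup>* x\<^sub>j\<close> one has \<open>R Y = diag(\<theta>) R\<close> and \<open>R diag(\<theta>\<^sup>*) = T R\<close>, and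
  the non-adjacency of \<open>E\<^sub>0\<close> to \<open>E\<^sub>2, \<dots>, E\<^sub>d\<close> says that row 0 of \<open>T\<close> is supported on \<open>{0, 1}\<close>,
  while \<open>T\<^sub>0\<^sub>0 = a\<^sup>*\<^sub>0\<close>. Taking row 0 of \<open>R diag(\<theta>\<^sup>*) Y = T diag(\<theta>) R\<close> minus \<open>\<theta>\<^sub>1\<close> times row 0 of
  \<open>R diag(\<theta>\<^sup>*) = T R\<close> eliminates \<open>T\<^sub>0\<^sub>1\<close>; in column 0 (resp. \<open>d\<close>), where \<open>Y\<close> has a single
  nonzero entry in row 1 (resp. \<open>d - 1\<close>), this gives
  \<open>(\<theta>\<^sub>0\<theta>\<^sup>*\<^sub>1 - \<theta>\<^sub>1\<theta>\<^sup>*\<^sub>0) R\<^sub>0\<^sub>0 = (\<theta>\<^sub>0 - \<theta>\<^sub>1) a\<^sup>*\<^sub>0 R\<^sub>0\<^sub>0\<close> and its analogue for \<open>R\<^sub>0\<^sub>d\<close>.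
  Finally row 0 of \<open>R\<close> is a nonzero left eigenvector of \<open>Y\<close>, so by the three-term recurrence its
  first and last entries cannot vanish.
\<close>

lemma mat_trace_mult_comm:
  fixes A B :: "'a::comm_ring_1 mat"
  assumes "A \<in> carrier_mat n m" and "B \<in> carrier_mat m n"
  shows "mat_trace (A * B) = mat_trace (B * A)"
proof -
  have "mat_trace (A * B) = (\<Sum>i<n. \<Sum>k<m. A $$ (i,k) * B $$ (k,i))"
    using assms unfolding mat_trace_def
    by (auto simp: scalar_prod_def lessThan_atLeast0 intro!: sum.cong)
  also have "\<dots> = (\<Sum>k<m. \<Sum>i<n. B $$ (k,i) * A $$ (i,k))"
    by (subst sum.swap) (simp add: mult.commute)
  also have "\<dots> = mat_trace (B * A)"
    using assms unfolding mat_trace_def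
    by (auto simp: scalar_prod_def lessThan_atLeast0 intro!: sum.cong)
  finally show ?thesis .
qed

lemma index_mult_mat_sparse:
  assumes "M \<in> carrier_mat n m" "N \<in> carrier_mat m k" "r < n" "c < k"
    and "S \<subseteq> {..<m}" and "\<And>l. l < m \<Longrightarrow> l \<notin> S \<Longrightarrow> M $$ (r,l) * N $$ (l,c) = 0"
  shows "(M * N) $$ (r,c) = (\<Sum>l\<in>S. M $$ (r,l) * N $$ (l,c))"
proof -
  have "(M * N) $$ (r,c) = (\<Sum>l<m. M $$ (r,l) * N $$ (l,c))"
    using assms(1-4) by (simp add: scalar_prod_def lessThan_atLeast0)
  also have "\<dots> = (\<Sum>l\<in>S. M $$ (r,l) * N $$ (l,c))"
    using assms(5,6) by (intro sum.mono_neutral_right) auto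
  finally show ?thesis .
qed

lemma det_nonzero_obtain_inverse:
  fixes P :: "'a::field mat"
  assumes P: "P \<in> carrier_mat n n" and "det P \<noteq> 0"
  obtains Q where "Q \<in> carrier_mat n n" "P * Q = 1\<^sub>m n" "Q * P = 1\<^sub>m n"
proof -
  from det_non_zero_imp_unit[OF assms, of "()"]
  obtain Q where QP: "Q * P = 1\<^sub>m n" and Q: "Q \<in> carrier_mat n n"
    unfolding Units_def ring_mat_def by auto
  with mat_mult_left_right_inverse[OF Q P QP] show ?thesis using that by blast
qed

lemma mult_left_inverse_cancel:
  fixes A P Q :: "'a::semiring_1 mat"
  assumes "A \<in> carrier_mat n m" "P \<in> carrier_mat n n" "Q \<in> carrier_mat n n" "Q * P = 1\<^sub>m n"
  shows "Q * (P * A) = A"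
  using assms by (simp add: assoc_mult_mat[symmetric])

lemma mat_diag_mult_vec:
  assumes "v \<in> carrier_vec n"
  shows "mat_diag n f *\<^sub>v v = vec n (\<lambda>i. f i * v $ i)"
proof (rule eq_vecI)
  fix i assume "i < dim_vec (vec n (\<lambda>i. f i * v $ i))"
  hence i: "i < n" by simp
  have "(mat_diag n f *\<^sub>v v) $ i = (\<Sum>l\<in>{0..<n}. (if i = l then f l else 0) * v $ l)"
    using i assms by (simp add: mat_diag_def scalar_prod_def)
  also have "\<dots> = (\<Sum>l\<in>{0..<n}. if l = i then f i * v $ i else 0)"
    by (intro sum.cong) auto
  finally show "(mat_diag n f *\<^sub>v v) $ i = vec n (\<lambda>i. f i * v $ i) $ i" using i by simp
qed (simp add: mat_diag_def)

lemma mult_mat_of_cols_eigenvectors: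
  fixes M :: "'a::comm_ring_1 mat"
  assumes M: "M \<in> carrier_mat n n"
    and eig: "\<And>j. j < n \<Longrightarrow> vs j \<in> carrier_vec n \<and> M *\<^sub>v vs j = c j \<cdot>\<^sub>v vs j"
  shows "M * mat_of_cols n (map vs [0..<n]) = mat_of_cols n (map vs [0..<n]) * mat_diag n c"
  (is "M * ?P = ?P * _")
proof -
  have P: "?P \<in> carrier_mat n n" by (simp add: mat_of_cols_def)
  have col: "col ?P j = vs j" if "j < n" for j using that eig by simp
  show ?thesis
  proof (rule eq_matI)
    fix r j assume "r < dim_row (?P * mat_diag n c)" "j < dim_col (?P * mat_diag n c)"
    hence rj: "r < n" "j < n" using P mat_diag_dim[of n c] by auto
    have "(M * ?P) $$ (r,j) = (M *\<^sub>v vs j) $ r" using rj M P col by simp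
    also have "\<dots> = ?P $$ (r,j) * c j" using rj eig[OF rj(2)] by (auto simp: mat_of_cols_def mult.commute)
    finally show "(M * ?P) $$ (r,j) = (?P * mat_diag n c) $$ (r,j)"
      using rj by (simp add: mat_diag_mult_right[OF P])
  qed (use M P in \<open>auto simp: mat_diag_def\<close>)
qed

lemma diagonalize_by_eigenvectors:
  fixes M :: "'a::comm_ring_1 mat"
  assumes "M \<in> carrier_mat n n"
    and "\<And>j. j < n \<Longrightarrow> vs j \<in> carrier_vec n \<and> M *\<^sub>v vs j = c j \<cdot>\<^sub>v vs j"
    and "Q \<in> carrier_mat n n" "mat_of_cols n (map vs [0..<n]) * Q = 1\<^sub>m n"
  shows "M = mat_of_cols n (map vs [0..<n]) * mat_diag n c * Q"
proof -
  let ?P = "mat_of_cols n (map vs [0..<n])"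
  have P: "?P \<in> carrier_mat n n" by (simp add: mat_of_cols_def)
  have "M = M * (?P * Q)" using assms(1,4) by simp
  also have "\<dots> = (M * ?P) * Q" using assms P by simp
  finally show ?thesis using mult_mat_of_cols_eigenvectors[OF assms(1,2)] by simp
qed

lemma mat_of_cols_mult_unit_vec:
  fixes x :: "nat \<Rightarrow> 'a::semiring_1 vec"
  assumes "j < n" "\<And>i. i < n \<Longrightarrow> x i \<in> carrier_vec n"
  shows "mat_of_cols n (map x [0..<n]) *\<^sub>v unit_vec n j = x j"
  using assms(1) assms(2)[OF assms(1)] by (intro eq_vecI) (auto simp: mat_of_cols_def)

lemma smult_vec_eq_zero:
  fixes v :: "'a::field vec"
  assumes "a \<cdot>\<^sub>v v = 0\<^sub>v n" "v \<in> carrier_vec n" "v \<noteq> 0\<^sub>v n"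
  shows "a = 0"
proof -
  obtain r where "r < n" "v $ r \<noteq> 0" using assms(2,3) by (metis carrier_vecD eq_vecI index_zero_vec)
  moreover have "a * v $ r = 0" using assms(1,2) \<open>r < n\<close> by (metis carrier_vecD index_smult_vec(1) index_zero_vec(1))
  ultimately show ?thesis by simp
qed

lemma eigen_product_mult_vec:
  fixes A :: "'a::field mat"
  assumes A: "A \<in> carrier_mat n n" and x: "x \<in> carrier_vec n" and ev: "A *\<^sub>v x = t \<cdot>\<^sub>v x"
  shows "foldr (\<lambda>k M. (A - \<theta> k \<cdot>\<^sub>m 1\<^sub>m n) * M) ks (1\<^sub>m n) \<in> carrier_mat n n \<and>
    foldr (\<lambda>k M. (A - \<theta> k \<cdot>\<^sub>m 1\<^sub>m n) * M) ks (1\<^sub>m n) *\<^sub>v x = (\<Prod>k\<leftarrow>ks. t - \<theta> k) \<cdot>\<^sub>v x"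
    (is "?Q ks \<in> _ \<and> _")
proof (induction ks)
  case Nil
  then show ?case using x by auto
next
  case (Cons k ks)
  let ?p = "\<Prod>k\<leftarrow>ks. t - \<theta> k"
  have B: "A - \<theta> k \<cdot>\<^sub>m 1\<^sub>m n \<in> carrier_mat n n" using A by auto
  have Bx: "(A - \<theta> k \<cdot>\<^sub>m 1\<^sub>m n) *\<^sub>v x = (t - \<theta> k) \<cdot>\<^sub>v x"
    using A x ev by (intro eq_vecI) (auto simp: minus_mult_distrib_mat_vec[OF A _ x] algebra_simps)
  have Q: "?Q ks \<in> carrier_mat n n" and Qx: "?Q ks *\<^sub>v x = ?p \<cdot>\<^sub>v x" using Cons by auto
  have "?Q (k # ks) *\<^sub>v x = (A - \<theta> k \<cdot>\<^sub>m 1\<^sub>m n) *\<^sub>v (?Q ks *\<^sub>v x)"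
    using assoc_mult_mat_vec[OF B Q x] by simp
  also have "\<dots> = ((t - \<theta> k) * ?p) \<cdot>\<^sub>v x"
    unfolding Qx using mult_mat_vec[OF B x] Bx by (simp add: smult_smult_assoc mult.commute)
  finally show ?case using B Q by simp
qed

lemma det_eigenvectors_nonzero:
  fixes A :: "'a::field mat"
  assumes A: "A \<in> carrier_mat n n"
    and x: "\<And>j. j < n \<Longrightarrow> x j \<in> carrier_vec n \<and> x j \<noteq> 0\<^sub>v n \<and> A *\<^sub>v x j = \<theta> j \<cdot>\<^sub>v x j"
    and dist: "\<And>i j. i < n \<Longrightarrow> j < n \<Longrightarrow> i \<noteq> j \<Longrightarrow> \<theta> i \<noteq> \<theta> j"
  shows "det (mat_of_cols n (map x [0..<n])) \<noteq> 0"
proof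
  let ?X = "mat_of_cols n (map x [0..<n])"
  have X: "?X \<in> carrier_mat n n" by (simp add: mat_of_cols_def)
  assume "det ?X = 0"
  then obtain c where c: "c \<in> carrier_vec n" "c \<noteq> 0\<^sub>v n" "?X *\<^sub>v c = 0\<^sub>v n"
    using det_0_iff_vec_prod_zero_field[OF X] by auto
  have "c $ j = 0" if j: "j < n" for j
  proof -
    \<comment> \<open>the product of the factors \<open>A - \<theta> k\<close> for \<open>k \<noteq> j\<close> kills every \<open>x i\<close> except \<open>x j\<close>\<close>
    let ?ks = "filter (\<lambda>k. k \<noteq> j) [0..<n]"
    let ?Q = "foldr (\<lambda>k M. (A - \<theta> k \<cdot>\<^sub>m 1\<^sub>m n) * M) ?ks (1\<^sub>m n)"
    let ?p = "\<lambda>i. \<Prod>k\<leftarrow>?ks. \<theta> i - \<theta> k"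
    have Q: "?Q \<in> carrier_mat n n" using eigen_product_mult_vec[OF A, of "x j"] x j by auto
    have Qx: "?Q *\<^sub>v x i = ?p i \<cdot>\<^sub>v x i" if "i < n" for i
      using eigen_product_mult_vec[OF A, of "x i" "\<theta> i" \<theta> ?ks] x that by auto
    have p0: "?p i = 0" if "i < n" "i \<noteq> j" for i
      using that by (auto simp: prod_list_zero_iff)
    have pj: "?p j \<noteq> 0" using dist j by (auto simp: prod_list_zero_iff)
    have QX: "?Q * ?X = mat_of_cols n (map x [0..<n]) * mat_diag n ?p"
      using mult_mat_of_cols_eigenvectors[OF Q, of x ?p] Qx x by blast
    have "0\<^sub>v n = ?Q *\<^sub>v (?X *\<^sub>v c)" using c Q by (intro eq_vecI) auto
    also have "\<dots> = (?X * mat_diag n ?p) *\<^sub>v c"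
      using assoc_mult_mat_vec[OF Q X c(1)] QX by simp
    also have "\<dots> = ?X *\<^sub>v (mat_diag n ?p *\<^sub>v c)"
      using assoc_mult_mat_vec[OF X mat_diag_dim c(1)] .
    also have "mat_diag n ?p *\<^sub>v c = (c $ j * ?p j) \<cdot>\<^sub>v unit_vec n j"
      using c j p0 by (intro eq_vecI) (auto simp: mat_diag_mult_vec)
    also have "?X *\<^sub>v ((c $ j * ?p j) \<cdot>\<^sub>v unit_vec n j) = (c $ j * ?p j) \<cdot>\<^sub>v x j"
      using X mat_of_cols_mult_unit_vec[of j n x] x j by (simp add: mult_mat_vec)
    finally have "(c $ j * ?p j) \<cdot>\<^sub>v x j = 0\<^sub>v n" ..
    with x[OF j] have "c $ j * ?p j = 0" by (blast dest: smult_vec_eq_zero)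
    with pj show ?thesis by simp
  qed
  hence "c = 0\<^sub>v n" using c by (intro eq_vecI) auto
  with c show False by simp
qed

definition diag_unit_mat :: "nat \<Rightarrow> nat \<Rightarrow> 'a::semiring_1 mat" where
  "diag_unit_mat n i = mat_diag n (\<lambda>j. of_bool (j = i))"

lemma diag_unit_mat_carrier [simp]: "diag_unit_mat n i \<in> carrier_mat n n"
  by (simp add: diag_unit_mat_def)

lemma mat_trace_diag_unit_mult:
  fixes M :: "'a::comm_ring_1 mat"
  assumes "M \<in> carrier_mat n n" "i < n"
  shows "mat_trace (diag_unit_mat n i * M) = M $$ (i,i)"
proof -
  have "mat_trace (diag_unit_mat n i * M) = (\<Sum>r<n. of_bool (r = i) * M $$ (r,r))"
    using assms by (simp add: mat_trace_def diag_unit_mat_def mat_diag_mult_left)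
  also have "\<dots> = M $$ (i,i)" using assms(2) by simp
  finally show ?thesis .
qed

lemma diag_unit_sandwich_eq_zero_iff:
  fixes M :: "'a::comm_ring_1 mat"
  assumes M: "M \<in> carrier_mat n n" and "i < n" "j < n"
  shows "diag_unit_mat n i * M * diag_unit_mat n j = 0\<^sub>m n n \<longleftrightarrow> M $$ (i,j) = 0"
proof -
  have "diag_unit_mat n i * M = mat n n (\<lambda>(r,c). of_bool (r = i) * M $$ (r,c))"
    using M by (simp add: diag_unit_mat_def mat_diag_mult_left)
  also have "\<dots> * diag_unit_mat n j = mat n n (\<lambda>(r,c). if r = i \<and> c = j then M $$ (i,j) else 0)"
    by (intro eq_matI) (auto simp: diag_unit_mat_def mat_diag_mult_right[of _ n n])
  finally have "diag_unit_mat n i * M * diag_unit_mat n j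
      = mat n n (\<lambda>(r,c). if r = i \<and> c = j then M $$ (i,j) else 0)" .
  then show ?thesis
    using assms by (auto simp: mat_eq_iff[of _ "0\<^sub>m n n"] split: if_splits)
qed

lemma conj_mult:
  fixes A B P Q :: "'a::comm_ring_1 mat"
  assumes "A \<in> carrier_mat n n" "B \<in> carrier_mat n n"
    and "P \<in> carrier_mat n n" "Q \<in> carrier_mat n n" "Q * P = 1\<^sub>m n"
  shows "(P * A * Q) * (P * B * Q) = P * (A * B) * Q"
proof -
  have "Q * (P * B * Q) = B * Q"
    using mult_left_inverse_cancel[of "B * Q" n n P Q] assms by simp
  then show ?thesis
    using assms by (simp add: assoc_mult_mat[of _ n n _ n _ n] mult_carrier_mat[of _ n n _ n])
qed

lemma conj_eq_zero_iff:
  fixes A P Q :: "'a::comm_ring_1 mat"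
  assumes "A \<in> carrier_mat n n" "P \<in> carrier_mat n n" "Q \<in> carrier_mat n n" "Q * P = 1\<^sub>m n"
  shows "P * A * Q = 0\<^sub>m n n \<longleftrightarrow> A = 0\<^sub>m n n"
proof
  assume "P * A * Q = 0\<^sub>m n n"
  moreover have "Q * (P * A * Q) * P = A"
    using mult_left_inverse_cancel[of "A * Q" n n P Q] assms by simp
  ultimately show "A = 0\<^sub>m n n" using assms by (metis left_mult_zero_mat right_mult_zero_mat)
qed (use assms in simp)

lemma mat_trace_conj:
  fixes A P Q :: "'a::comm_ring_1 mat"
  assumes "A \<in> carrier_mat n n" "P \<in> carrier_mat n n" "Q \<in> carrier_mat n n" "Q * P = 1\<^sub>m n"
  shows "mat_trace (P * A * Q) = mat_trace A"
proof -
  have "mat_trace (P * A * Q) = mat_trace (Q * (P * A))"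
    using assms by (intro mat_trace_mult_comm) auto
  also have "Q * (P * A) = A" using assms by (rule mult_left_inverse_cancel)
  finally show ?thesis .
qed

lemma conj_conj_cancel:
  fixes B P Q :: "'a::semiring_1 mat"
  assumes "B \<in> carrier_mat n n" "P \<in> carrier_mat n n" "Q \<in> carrier_mat n n" "P * Q = 1\<^sub>m n"
  shows "P * (Q * B * P) * Q = B"
  using assms mult_left_inverse_cancel[of B n n Q P]
  by (simp add: assoc_mult_mat[of _ n n _ n _ n] mult_carrier_mat[of _ n n _ n])

lemma conj_diag_unit_sandwich_eq_zero_iff:
  fixes B P Q :: "'a::comm_ring_1 mat"
  assumes "B \<in> carrier_mat n n" "P \<in> carrier_mat n n" "Q \<in> carrier_mat n n"
    and "P * Q = 1\<^sub>m n" "Q * P = 1\<^sub>m n" "i < n" "j < n"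
  shows "(P * diag_unit_mat n i * Q) * B * (P * diag_unit_mat n j * Q) = 0\<^sub>m n n
     \<longleftrightarrow> (Q * B * P) $$ (i,j) = 0"
proof -
  define M where "M = Q * B * P"
  have M: "M \<in> carrier_mat n n" unfolding M_def using assms by auto
  have "(P * diag_unit_mat n i * Q) * B * (P * diag_unit_mat n j * Q)
      = P * (diag_unit_mat n i * M * diag_unit_mat n j) * Q"
    using assms conj_mult[of "diag_unit_mat n i" n M P Q]
      conj_mult[of "diag_unit_mat n i * M" n "diag_unit_mat n j" P Q]
      mult_carrier_mat[OF diag_unit_mat_carrier M] conj_conj_cancel[of B n P Q] M
    unfolding M_def by (simp del: assoc_mult_mat)
  then show ?thesis
    using assms M unfolding M_def[symmetric]
    by (simp add: conj_eq_zero_iff diag_unit_sandwich_eq_zero_iff mult_carrier_mat[of _ n n _ n]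
        del: assoc_mult_mat)
qed

lemma mat_trace_conj_diag_unit_mult:
  fixes B P Q :: "'a::comm_ring_1 mat"
  assumes "B \<in> carrier_mat n n" "P \<in> carrier_mat n n" "Q \<in> carrier_mat n n"
    and "P * Q = 1\<^sub>m n" "Q * P = 1\<^sub>m n" "i < n"
  shows "mat_trace ((P * diag_unit_mat n i * Q) * B) = (Q * B * P) $$ (i,i)"
proof -
  define M where "M = Q * B * P"
  have M: "M \<in> carrier_mat n n" unfolding M_def using assms by auto
  have "(P * diag_unit_mat n i * Q) * B = P * (diag_unit_mat n i * M) * Q"
    using assms conj_mult[of "diag_unit_mat n i" n M P Q] conj_conj_cancel[of B n P Q] M
    unfolding M_def by (simp del: assoc_mult_mat)
  then show ?thesis
    using assms M mult_carrier_mat[OF diag_unit_mat_carrier M]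
      mat_trace_conj[of "diag_unit_mat n i * M" n P Q]
    unfolding M_def[symmetric] by (simp add: mat_trace_diag_unit_mult del: assoc_mult_mat)
qed

lemma upper_hessenberg_left_eigenvector_vanishes:
  fixes Y :: "'a::field mat"
  assumes zero: "\<And>k c. c + 1 < k \<Longrightarrow> k < n \<Longrightarrow> Y $$ (k,c) = 0"
    and subdiag: "\<And>c. c + 1 < n \<Longrightarrow> Y $$ (c+1,c) \<noteq> 0"
    and eig: "\<And>c. c < n \<Longrightarrow> (\<Sum>k<n. f k * Y $$ (k,c)) = t * f c"
    and "f 0 = 0"
  shows "k < n \<Longrightarrow> f k = 0"
proof (induction k rule: less_induct)
  case (less m)
  show ?case
  proof (cases m)
    case 0 with \<open>f 0 = 0\<close> show ?thesis by simp
  next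
    case (Suc c)
    have IH: "f k = 0" if "k \<le> c" for k using less that Suc by simp
    have other: "f k * Y $$ (k,c) = 0" if "k < n" "k \<noteq> m" for k
    proof (cases "k \<le> c")
      case False
      with that Suc have "c + 1 < k" by simp
      with zero \<open>k < n\<close> show ?thesis by simp
    qed (simp add: IH)
    have "t * f c = (\<Sum>k<n. f k * Y $$ (k,c))" using eig less Suc by simp
    also have "\<dots> = (\<Sum>k\<in>{m}. f k * Y $$ (k,c))"
      using less other by (intro sum.mono_neutral_right) auto
    finally have "f m * Y $$ (m,c) = 0" using IH Suc by simp
    with subdiag[of c] less Suc show ?thesis by simp
  qed
qed

lemma lower_hessenberg_left_eigenvector_vanishes:
  fixes Y :: "'a::field mat"
  assumes zero: "\<And>k c. k + 1 < c \<Longrightarrow> c < n \<Longrightarrow> Y $$ (k,c) = 0"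
    and superdiag: "\<And>c. c + 1 < n \<Longrightarrow> Y $$ (c,c+1) \<noteq> 0"
    and eig: "\<And>c. c < n \<Longrightarrow> (\<Sum>k<n. f k * Y $$ (k,c)) = t * f c"
    and "f (n - 1) = 0"
  shows "k < n \<Longrightarrow> f k = 0"
proof -
  let ?Y = "mat n n (\<lambda>(k,c). Y $$ (n - Suc k, n - Suc c))"
  let ?f = "\<lambda>k. f (n - Suc k)"
  have "?Y $$ (k,c) = 0" if "c + 1 < k" "k < n" for k c
    using that zero by simp
  moreover have "?Y $$ (c+1,c) \<noteq> 0" if "c + 1 < n" for c
    using that superdiag[of "n - Suc (c+1)"] by (simp add: Suc_diff_Suc)
  moreover have "(\<Sum>k<n. ?f k * ?Y $$ (k,c)) = t * ?f c" if "c < n" for c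
  proof -
    have "(\<Sum>k<n. ?f k * ?Y $$ (k,c)) = (\<Sum>k<n. f (n - Suc k) * Y $$ (n - Suc k, n - Suc c))"
      using that by (intro sum.cong) auto
    also have "\<dots> = (\<Sum>k<n. f k * Y $$ (k, n - Suc c))"
      by (rule sum.nat_diff_reindex)
    finally show ?thesis using eig[of "n - Suc c"] that by simp
  qed
  ultimately have "?f k = 0" if "k < n" for k
    using upper_hessenberg_left_eigenvector_vanishes[of n ?Y ?f t k] \<open>f (n - 1) = 0\<close> that by simp
  from this[of "n - Suc k"] show "k < n \<Longrightarrow> f k = 0" by (simp add: Suc_diff_Suc)
qed

definition irreducible_bipartite_tridiagonal :: "nat \<Rightarrow> 'a::zero mat \<Rightarrow> bool" where
  "irreducible_bipartite_tridiagonal n Y \<longleftrightarrow>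
     (\<forall>i<n. \<forall>j<n. Y $$ (i,j) \<noteq> 0 \<longleftrightarrow> i = j + 1 \<or> j = i + 1)"

lemma irreducible_bipartite_tridiagonal_left_eigenvector_ends:
  fixes Y :: "'a::field mat"
  assumes Y: "irreducible_bipartite_tridiagonal n Y"
    and eig: "\<And>c. c < n \<Longrightarrow> (\<Sum>k<n. f k * Y $$ (k,c)) = t * f c"
    and "k < n" "f k \<noteq> 0"
  shows "f 0 \<noteq> 0" "f (n - 1) \<noteq> 0"
proof -
  have "Y $$ (k,c) = 0" if "c + 1 < k \<or> k + 1 < c" "k < n" "c < n" for k c
  proof -
    have "Y $$ (k,c) \<noteq> 0 \<longleftrightarrow> k = c + 1 \<or> c = k + 1"
      using Y that(2,3) unfolding irreducible_bipartite_tridiagonal_def by blast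
    with that(1) show ?thesis by auto
  qed
  moreover have "Y $$ (c+1,c) \<noteq> 0" "Y $$ (c,c+1) \<noteq> 0" if "c + 1 < n" for c
    using Y that unfolding irreducible_bipartite_tridiagonal_def by auto
  ultimately show "f 0 \<noteq> 0" "f (n - 1) \<noteq> 0"
    using upper_hessenberg_left_eigenvector_vanishes[of n Y f t k]
      lower_hessenberg_left_eigenvector_vanishes[of n Y f t k] eig assms(3,4) by auto
qed

lemma mat_lincomb_mult_vec:
  fixes M :: "nat \<Rightarrow> 'a::comm_ring_1 mat"
  assumes M: "\<And>i. i \<le> d \<Longrightarrow> M i \<in> carrier_mat n n"
    and Mw: "\<And>i. i \<le> d \<Longrightarrow> M i *\<^sub>v w = (if i = j then w else 0\<^sub>v n)"
    and "j \<le> d" and w: "w \<in> carrier_vec n"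
  shows "mat_lincomb n d c M *\<^sub>v w = c j \<cdot>\<^sub>v w"
proof (rule eq_vecI)
  fix r assume "r < dim_vec (c j \<cdot>\<^sub>v w)"
  hence r: "r < n" using w by simp
  have "(mat_lincomb n d c M *\<^sub>v w) $ r = (\<Sum>l<n. (\<Sum>i\<le>d. c i * M i $$ (r,l)) * w $ l)"
    using r w by (simp add: mat_lincomb_def scalar_prod_def lessThan_atLeast0)
  also have "\<dots> = (\<Sum>i\<le>d. c i * (\<Sum>l<n. M i $$ (r,l) * w $ l))"
    by (simp add: sum_distrib_left sum_distrib_right mult.assoc sum.swap[of _ "{..<n}"])
  also have "\<dots> = (\<Sum>i\<le>d. c i * (M i *\<^sub>v w) $ r)"
  proof (intro sum.cong refl)
    fix i assume "i \<in> {..d}"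
    with M[of i] r w show "c i * (\<Sum>l<n. M i $$ (r,l) * w $ l) = c i * (M i *\<^sub>v w) $ r"
      by (simp add: scalar_prod_def lessThan_atLeast0)
  qed
  also have "\<dots> = (\<Sum>i\<le>d. if i = j then c j * w $ r else 0)"
    using Mw r w by (intro sum.cong) auto
  also have "\<dots> = c j * w $ r" using \<open>j \<le> d\<close> by simp
  finally show "(mat_lincomb n d c M *\<^sub>v w) $ r = (c j \<cdot>\<^sub>v w) $ r" using r w by simp
qed (use w in \<open>simp add: mat_lincomb_def\<close>)

lemma primitive_idempotents_diagonalize:
  fixes A :: "'a::field mat"
  assumes A: "A \<in> carrier_mat n n"
    and eig: "\<And>i. i < n \<Longrightarrow> eigenvalue A (\<theta> i)"
    and dist: "\<And>i j. i < n \<Longrightarrow> j < n \<Longrightarrow> i \<noteq> j \<Longrightarrow> \<theta> i \<noteq> \<theta> j"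
    and prim: "\<And>i. i < n \<Longrightarrow> primitive_idempotent n A (\<theta> i) (E i)"
  obtains X Xi where "X \<in> carrier_mat n n" "Xi \<in> carrier_mat n n" "X * Xi = 1\<^sub>m n" "Xi * X = 1\<^sub>m n"
    and "A = X * mat_diag n \<theta> * Xi"
    and "\<And>i. i < n \<Longrightarrow> E i = X * diag_unit_mat n i * Xi"
proof -
  have "\<forall>j. \<exists>v. j < n \<longrightarrow> v \<in> carrier_vec n \<and> v \<noteq> 0\<^sub>v n \<and> A *\<^sub>v v = \<theta> j \<cdot>\<^sub>v v"
    using eig A unfolding eigenvalue_def eigenvector_def by auto
  then obtain x where x: "\<And>j. j < n \<Longrightarrow> x j \<in> carrier_vec n \<and> x j \<noteq> 0\<^sub>v n \<and> A *\<^sub>v x j = \<theta> j \<cdot>\<^sub>v x j"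
    by metis
  let ?X = "mat_of_cols n (map x [0..<n])"
  have X: "?X \<in> carrier_mat n n" by (simp add: mat_of_cols_def)
  obtain Xi where Xi: "Xi \<in> carrier_mat n n" "?X * Xi = 1\<^sub>m n" "Xi * ?X = 1\<^sub>m n"
    using det_nonzero_obtain_inverse[OF X det_eigenvectors_nonzero[OF A x dist]] by blast
  have "A = ?X * mat_diag n \<theta> * Xi"
    using diagonalize_by_eigenvectors[OF A _ Xi(1,2)] x by blast
  moreover have "E i = ?X * diag_unit_mat n i * Xi" if i: "i < n" for i
    unfolding diag_unit_mat_def
  proof (rule diagonalize_by_eigenvectors[OF _ _ Xi(1,2)])
    show "E i \<in> carrier_mat n n" using prim[OF i] by (simp add: primitive_idempotent_def)
    show "x j \<in> carrier_vec n \<and> E i *\<^sub>v x j = of_bool (j = i) \<cdot>\<^sub>v x j" if "j < n" for j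
    proof (cases "j = i")
      case False
      then have "E i *\<^sub>v x j = 0\<^sub>v n"
        using prim[OF i] x[OF that] dist[OF that i] unfolding primitive_idempotent_def by blast
      then show ?thesis using False x[OF that] by (auto intro!: eq_vecI)
    qed (use prim[OF i] x[OF that] in \<open>auto simp: primitive_idempotent_def\<close>)
  qed
  ultimately show ?thesis using that X Xi by blast
qed

lemma orth_idempotent_system_mult_vec:
  assumes Es: "orth_idempotent_system n d Es" and "i \<le> d" "j \<le> d" and w: "w \<in> carrier_vec n"
  shows "Es i *\<^sub>v (Es j *\<^sub>v w) = (if i = j then Es j *\<^sub>v w else 0\<^sub>v n)"
proof -
  have "Es i \<in> carrier_mat n n" "Es j \<in> carrier_mat n n"
    using Es assms(2,3) unfolding orth_idempotent_system_def by auto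
  then have "Es i *\<^sub>v (Es j *\<^sub>v w) = (Es i * Es j) *\<^sub>v w" using w by simp
  also have "\<dots> = (if i = j then Es j *\<^sub>v w else 0\<^sub>v n)"
    using Es assms(2,3) w unfolding orth_idempotent_system_def by auto
  finally show ?thesis .
qed

lemma normalizing_basis_diagonalizes:
  fixes A :: "'a::field mat"
  assumes Es: "orth_idempotent_system (d+1) d Es"
    and A: "A \<in> carrier_mat (d+1) (d+1)"
    and "normalizing d Es A t"
  obtains P Pi Y where "P \<in> carrier_mat (d+1) (d+1)" "Pi \<in> carrier_mat (d+1) (d+1)"
    and "P * Pi = 1\<^sub>m (d+1)" "Pi * P = 1\<^sub>m (d+1)"
    and "Y \<in> carrier_mat (d+1) (d+1)" "A = P * Y * Pi"
    and "\<And>i. i \<le> d \<Longrightarrow> Es i = P * diag_unit_mat (d+1) i * Pi"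
    and "\<And>c. mat_lincomb (d+1) d c Es = P * mat_diag (d+1) c * Pi"
proof -
  from \<open>normalizing d Es A t\<close> obtain v Y where
    v: "\<And>i. i \<le> d \<Longrightarrow> v i \<in> carrier_vec (d+1) \<and> (\<exists>w \<in> carrier_vec (d+1). v i = Es i *\<^sub>v w)"
    and det: "det (mat_of_cols (d+1) (map v [0..<d+1])) \<noteq> 0"
    and Y: "Y \<in> carrier_mat (d+1) (d+1)"
    and AP: "A * mat_of_cols (d+1) (map v [0..<d+1]) = mat_of_cols (d+1) (map v [0..<d+1]) * Y"
    unfolding normalizing_def by blast
  let ?P = "mat_of_cols (d+1) (map v [0..<d+1])"
  have P: "?P \<in> carrier_mat (d+1) (d+1)" by (simp add: mat_of_cols_def)
  obtain Pi where Pi: "Pi \<in> carrier_mat (d+1) (d+1)" "?P * Pi = 1\<^sub>m (d+1)" "Pi * ?P = 1\<^sub>m (d+1)"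
    using det_nonzero_obtain_inverse[OF P det] by blast
  have Es_carrier: "Es i \<in> carrier_mat (d+1) (d+1)" if "i \<le> d" for i
    using Es that unfolding orth_idempotent_system_def by blast
  have Es_v: "Es i *\<^sub>v v j = (if i = j then v j else 0\<^sub>v (d+1))" if "i \<le> d" "j \<le> d" for i j
    using v[OF \<open>j \<le> d\<close>] orth_idempotent_system_mult_vec[OF Es that] by auto
  have "A = ?P * Y * Pi"
  proof -
    have "A = A * (?P * Pi)" using A Pi by simp
    also have "\<dots> = A * ?P * Pi" by (rule assoc_mult_mat[OF A P Pi(1), symmetric])
    finally show ?thesis unfolding AP .
  qed
  moreover have "Es i = ?P * diag_unit_mat (d+1) i * Pi" if "i \<le> d" for i
    unfolding diag_unit_mat_def
  proof (rule diagonalize_by_eigenvectors[OF Es_carrier[OF that] _ Pi(1,2)])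
    show "v j \<in> carrier_vec (d+1) \<and> Es i *\<^sub>v v j = of_bool (j = i) \<cdot>\<^sub>v v j" if "j < d+1" for j
    proof -
      have "v j \<in> carrier_vec (d+1)" using v[of j] that by simp
      then show ?thesis using Es_v[of i j] \<open>i \<le> d\<close> that by (auto intro!: eq_vecI)
    qed
  qed
  moreover have "mat_lincomb (d+1) d c Es = ?P * mat_diag (d+1) c * Pi" for c
  proof (rule diagonalize_by_eigenvectors[OF _ _ Pi(1,2)])
    show "mat_lincomb (d+1) d c Es \<in> carrier_mat (d+1) (d+1)" by (simp add: mat_lincomb_def)
    show "v j \<in> carrier_vec (d+1) \<and> mat_lincomb (d+1) d c Es *\<^sub>v v j = c j \<cdot>\<^sub>v v j"
      if "j < d+1" for j
    proof
      show "v j \<in> carrier_vec (d+1)" using v[of j] that by simp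
      then show "mat_lincomb (d+1) d c Es *\<^sub>v v j = c j \<cdot>\<^sub>v v j"
        using that by (intro mat_lincomb_mult_vec Es_carrier Es_v) simp_all
    qed
  qed
  ultimately show ?thesis using that P Pi Y by blast
qed

lemma irreducible_bipartite_tridiagonal_conj:
  fixes A P Q Y :: "'a::field mat"
  assumes P: "P \<in> carrier_mat n n" and Q: "Q \<in> carrier_mat n n" and Y: "Y \<in> carrier_mat n n"
    and PQ: "P * Q = 1\<^sub>m n" "Q * P = 1\<^sub>m n" and A: "A = P * Y * Q"
    and Es: "\<And>i. i < n \<Longrightarrow> Es i = P * diag_unit_mat n i * Q"
    and zero: "\<And>i j. i < n \<Longrightarrow> j < n \<Longrightarrow> \<bar>int i - int j\<bar> > 1 \<Longrightarrow> Es i * A * Es j = 0\<^sub>m n n"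
    and nonzero: "\<And>i j. i < n \<Longrightarrow> j < n \<Longrightarrow> \<bar>int i - int j\<bar> = 1 \<Longrightarrow> Es i * A * Es j \<noteq> 0\<^sub>m n n"
    and bipartite: "\<And>i. i < n \<Longrightarrow> mat_trace (Es i * A) = 0"
  shows "irreducible_bipartite_tridiagonal n Y"
  unfolding irreducible_bipartite_tridiagonal_def
proof (intro allI impI)
  fix i j assume ij: "i < n" "j < n"
  have Ac: "A \<in> carrier_mat n n" using A P Q Y by simp
  have Y_A: "Q * A * P = Y"
    using P Q Y PQ mult_left_inverse_cancel[of Y n n P Q] unfolding A
    by (simp add: assoc_mult_mat[of _ n n _ n _ n] mult_carrier_mat[of _ n n _ n])
  have iff: "Es i * A * Es j = 0\<^sub>m n n \<longleftrightarrow> Y $$ (i,j) = 0"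
    using conj_diag_unit_sandwich_eq_zero_iff[OF Ac P Q PQ ij] Es ij Y_A by simp
  consider "i = j" | "i = j + 1 \<or> j = i + 1" | "\<bar>int i - int j\<bar> > 1" by linarith
  then show "Y $$ (i,j) \<noteq> 0 \<longleftrightarrow> i = j + 1 \<or> j = i + 1"
  proof cases
    case 1
    have "Y $$ (i,i) = mat_trace (Es i * A)"
      using mat_trace_conj_diag_unit_mult[OF Ac P Q PQ ij(1)] Es ij Y_A by simp
    with 1 bipartite ij show ?thesis by simp
  next
    case 2
    with nonzero[OF ij] iff show ?thesis by auto
  next
    case 3
    with zero[OF ij] iff show ?thesis by auto
  qed
qed

lemma eigen_coordinates_intertwine:
  fixes A P Q X Xi Y :: "'a::field mat"
  assumes P: "P \<in> carrier_mat n n" and Q: "Q \<in> carrier_mat n n"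
    and X: "X \<in> carrier_mat n n" and Xi: "Xi \<in> carrier_mat n n" and Y: "Y \<in> carrier_mat n n"
    and PQ: "P * Q = 1\<^sub>m n" "Q * P = 1\<^sub>m n" and XXi: "X * Xi = 1\<^sub>m n" "Xi * X = 1\<^sub>m n"
    and A_Y: "A = P * Y * Q" and A_\<theta>: "A = X * mat_diag n \<theta> * Xi"
    and As: "As = P * mat_diag n \<theta>s * Q"
  shows "Xi * P * Y = mat_diag n \<theta> * (Xi * P)"
    and "Xi * P * mat_diag n \<theta>s = (Xi * As * X) * (Xi * P)"
    and "(Xi * P) * (Q * X) = 1\<^sub>m n"
proof -
  note assoc = assoc_mult_mat[of _ n n _ n _ n] mult_carrier_mat[of _ n n _ n]
  have Ac: "A \<in> carrier_mat n n" and Asc: "As \<in> carrier_mat n n"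
    using A_Y As P Q Y by auto
  have AP: "A * P = P * Y" using P Q Y PQ unfolding A_Y by (simp add: assoc)
  have XiA: "Xi * A = mat_diag n \<theta> * Xi"
    using X Xi XXi mult_left_inverse_cancel[of "mat_diag n \<theta> * Xi" n n X Xi]
    unfolding A_\<theta> by (simp add: assoc)
  have AsP: "As * P = P * mat_diag n \<theta>s"
    using P Q PQ right_mult_one_mat[OF mat_diag_dim[of n \<theta>s]] unfolding As by (simp add: assoc)
  have XiAs: "(Xi * As * X) * Xi = Xi * As" using X Xi Asc XXi by (simp add: assoc)
  show "Xi * P * Y = mat_diag n \<theta> * (Xi * P)"
  proof -
    have "Xi * P * Y = Xi * (A * P)" using Xi P Y by (simp add: AP)
    also have "\<dots> = (Xi * A) * P" using Xi Ac P by simp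
    finally show ?thesis using Xi P by (simp add: XiA assoc)
  qed
  show "Xi * P * mat_diag n \<theta>s = (Xi * As * X) * (Xi * P)"
  proof -
    have "Xi * P * mat_diag n \<theta>s = Xi * (As * P)" using Xi P by (simp add: AsP assoc)
    also have "\<dots> = ((Xi * As * X) * Xi) * P" using Xi Asc P by (simp add: XiAs)
    finally show ?thesis using Xi Asc X P by (simp add: assoc)
  qed
  show "(Xi * P) * (Q * X) = 1\<^sub>m n"
    using P Q X Xi PQ XXi by (simp add: assoc mult_left_inverse_cancel)
qed

lemma eigen_coordinates_column_identity:
  fixes R Y T :: "'a::field mat"
  assumes R: "R \<in> carrier_mat n n" and Y: "Y \<in> carrier_mat n n" and T: "T \<in> carrier_mat n n"
    and RY: "R * Y = mat_diag n \<theta> * R" and TR: "R * mat_diag n \<theta>s = T * R"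
    and T0: "\<And>l. 2 \<le> l \<Longrightarrow> l < n \<Longrightarrow> T $$ (0,l) = 0"
    and "1 < n" "c < n" "k < n"
    and col: "\<And>i. i < n \<Longrightarrow> i \<noteq> k \<Longrightarrow> Y $$ (i,c) = 0"
  shows "(\<theta> 0 * \<theta>s k - \<theta> 1 * \<theta>s c) * R $$ (0,c) = (\<theta> 0 - \<theta> 1) * T $$ (0,0) * R $$ (0,c)"
proof -
  have n: "0 < n" "1 < n" "c < n" "k < n" using assms by auto
  have RD: "R * mat_diag n \<theta>s \<in> carrier_mat n n" and TD: "T * mat_diag n \<theta> \<in> carrier_mat n n"
    using R T by auto
  have "R $$ (0,k) * Y $$ (k,c) = (R * Y) $$ (0,c)"
    using index_mult_mat_sparse[OF R Y n(1,3), of "{k}"] col n by simp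
  also have "\<dots> = \<theta> 0 * R $$ (0,c)" using R n unfolding RY by (simp add: mat_diag_mult_left)
  finally have RY0: "R $$ (0,k) * Y $$ (k,c) = \<theta> 0 * R $$ (0,c)" .
  have "R * mat_diag n \<theta>s * Y = T * R * Y" using TR by simp
  also have "\<dots> = T * mat_diag n \<theta> * R"
    using R T Y by (simp add: RY assoc_mult_mat[OF T mat_diag_dim R])
  finally have RDY: "R * mat_diag n \<theta>s * Y = T * mat_diag n \<theta> * R" .
  have "(R * mat_diag n \<theta>s * Y) $$ (0,c) = \<theta>s k * (\<theta> 0 * R $$ (0,c))"
    using index_mult_mat_sparse[OF RD Y n(1,3), of "{k}"] col n R RY0
    by (simp add: mat_diag_mult_right)
  moreover have "(T * mat_diag n \<theta> * R) $$ (0,c)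
      = T $$ (0,0) * \<theta> 0 * R $$ (0,c) + T $$ (0,1) * \<theta> 1 * R $$ (1,c)"
    using index_mult_mat_sparse[OF TD R n(1,3), of "{0,1}"] T0 n T
    by (simp add: mat_diag_mult_right not_less_eq_eq numeral_2_eq_2)
  moreover have "\<theta>s c * R $$ (0,c) = T $$ (0,0) * R $$ (0,c) + T $$ (0,1) * R $$ (1,c)"
  proof -
    have "\<theta>s c * R $$ (0,c) = (T * R) $$ (0,c)"
      using R n unfolding TR[symmetric] by (simp add: mat_diag_mult_right mult.commute)
    also have "\<dots> = T $$ (0,0) * R $$ (0,c) + T $$ (0,1) * R $$ (1,c)"
      using index_mult_mat_sparse[OF T R n(1,3), of "{0,1}"] T0 n
      by (simp add: not_less_eq_eq numeral_2_eq_2)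
    finally show ?thesis .
  qed
  ultimately have k: "\<theta>s k * (\<theta> 0 * R $$ (0,c))
      = T $$ (0,0) * \<theta> 0 * R $$ (0,c) + T $$ (0,1) * \<theta> 1 * R $$ (1,c)"
    and c: "\<theta>s c * R $$ (0,c) = T $$ (0,0) * R $$ (0,c) + T $$ (0,1) * R $$ (1,c)"
    using RDY by simp_all
  have "(\<theta> 0 * \<theta>s k - \<theta> 1 * \<theta>s c) * R $$ (0,c)
      = \<theta>s k * (\<theta> 0 * R $$ (0,c)) - \<theta> 1 * (\<theta>s c * R $$ (0,c))"
    by (simp add: algebra_simps)
  also have "\<dots> = (\<theta> 0 - \<theta> 1) * T $$ (0,0) * R $$ (0,c)"
    unfolding k c by (simp add: algebra_simps)
  finally show ?thesis .
qed

lemma eigen_coordinates_trace_formulas: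
  fixes R S Y T :: "'a::field mat"
  assumes R: "R \<in> carrier_mat n n" and S: "S \<in> carrier_mat n n" and RS: "R * S = 1\<^sub>m n"
    and Y: "Y \<in> carrier_mat n n" "irreducible_bipartite_tridiagonal n Y"
    and T: "T \<in> carrier_mat n n"
    and RY: "R * Y = mat_diag n \<theta> * R" and TR: "R * mat_diag n \<theta>s = T * R"
    and T0: "\<And>l. 2 \<le> l \<Longrightarrow> l < n \<Longrightarrow> T $$ (0,l) = 0"
    and "1 < n" and \<theta>01: "\<theta> 0 \<noteq> \<theta> 1"
  shows "T $$ (0,0) = (\<theta> 1 * \<theta>s 0 - \<theta> 0 * \<theta>s 1) / (\<theta> 1 - \<theta> 0)"
    and "T $$ (0,0) = (\<theta> 1 * \<theta>s (n-1) - \<theta> 0 * \<theta>s (n-2)) / (\<theta> 1 - \<theta> 0)"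
proof -
  have n: "0 < n" "1 < n" "n - 1 < n" "n - 2 < n" using \<open>1 < n\<close> by auto
  have "\<exists>k<n. R $$ (0,k) \<noteq> 0"
  proof (rule ccontr)
    assume "\<not> ?thesis"
    then have "(R * S) $$ (0,0) = 0" using R S n by (simp add: scalar_prod_def)
    with RS n show False by simp
  qed
  moreover have "(\<Sum>k<n. R $$ (0,k) * Y $$ (k,c)) = \<theta> 0 * R $$ (0,c)" if "c < n" for c
  proof -
    have "(\<Sum>k<n. R $$ (0,k) * Y $$ (k,c)) = (R * Y) $$ (0,c)"
      using R Y that n by (simp add: scalar_prod_def lessThan_atLeast0)
    then show ?thesis using R that n unfolding RY by (simp add: mat_diag_mult_left)
  qed
  ultimately have R0: "R $$ (0,0) \<noteq> 0" "R $$ (0,n-1) \<noteq> 0"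
    using irreducible_bipartite_tridiagonal_left_eigenvector_ends[OF Y(2), of "\<lambda>k. R $$ (0,k)"] by blast+
  have tri: "Y $$ (i,c) = 0 \<longleftrightarrow> \<not> (i = c + 1 \<or> c = i + 1)" if "i < n" "c < n" for i c
    using Y(2) that unfolding irreducible_bipartite_tridiagonal_def by blast
  have "(\<theta> 0 * \<theta>s 1 - \<theta> 1 * \<theta>s 0) * R $$ (0,0) = (\<theta> 0 - \<theta> 1) * T $$ (0,0) * R $$ (0,0)"
    by (rule eigen_coordinates_column_identity[OF R Y(1) T RY TR T0]) (use n tri in auto)
  with R0 have "\<theta> 0 * \<theta>s 1 - \<theta> 1 * \<theta>s 0 = (\<theta> 0 - \<theta> 1) * T $$ (0,0)" by simp
  with \<theta>01 show "T $$ (0,0) = (\<theta> 1 * \<theta>s 0 - \<theta> 0 * \<theta>s 1) / (\<theta> 1 - \<theta> 0)"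
    by (simp add: field_simps)
  have "(\<theta> 0 * \<theta>s (n-2) - \<theta> 1 * \<theta>s (n-1)) * R $$ (0,n-1)
      = (\<theta> 0 - \<theta> 1) * T $$ (0,0) * R $$ (0,n-1)"
    by (rule eigen_coordinates_column_identity[OF R Y(1) T RY TR T0]) (use n tri in auto)
  with R0 have "\<theta> 0 * \<theta>s (n-2) - \<theta> 1 * \<theta>s (n-1) = (\<theta> 0 - \<theta> 1) * T $$ (0,0)" by simp
  with \<theta>01 show "T $$ (0,0) = (\<theta> 1 * \<theta>s (n-1) - \<theta> 0 * \<theta>s (n-2)) / (\<theta> 1 - \<theta> 0)"
    by (simp add: field_simps)
qed

theorem lemma7p4:
  fixes d :: nat
    and Es E :: "nat \<Rightarrow> 'a::field mat"
    and A As :: "'a mat"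
    and \<theta> \<theta>s :: "nat \<Rightarrow> 'a"
  assumes d3: "d \<ge> 3"
    and Es_sys: "orth_idempotent_system (d+1) d Es"
    and A_carrier: "A \<in> carrier_mat (d+1) (d+1)"
    and tridiag0: "\<forall>i\<le>d. \<forall>j\<le>d. \<bar>int i - int j\<bar> > 1 \<longrightarrow> Es i * A * Es j = 0\<^sub>m (d+1) (d+1)"
    and tridiag1: "\<forall>i\<le>d. \<forall>j\<le>d. \<bar>int i - int j\<bar> = 1 \<longrightarrow> Es i * A * Es j \<noteq> 0\<^sub>m (d+1) (d+1)"
    and mult_free: "\<forall>i\<le>d. \<forall>j\<le>d. i \<noteq> j \<longrightarrow> \<theta> i \<noteq> \<theta> j"
    and eigval: "\<forall>i\<le>d. eigenvalue A (\<theta> i)"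
    and prim: "\<forall>i\<le>d. primitive_idempotent (d+1) A (\<theta> i) (E i)"
    and bipartite: "\<forall>i\<le>d. mat_trace (Es i * A) = 0"
    and As_def: "As = mat_lincomb (d+1) d \<theta>s Es"
    and normalizing: "normalizing d Es A (\<theta> 0)"
    and adj01: "E 0 * As * E 1 \<noteq> 0\<^sub>m (d+1) (d+1)"
    and nonadj: "\<forall>j. 2 \<le> j \<and> j \<le> d \<longrightarrow> E 0 * As * E j = 0\<^sub>m (d+1) (d+1)"
  shows "mat_trace (E 0 * As) = (\<theta> 1 * \<theta>s 0 - \<theta> 0 * \<theta>s 1) / (\<theta> 1 - \<theta> 0)
       \<and> mat_trace (E 0 * As) = (\<theta> 1 * \<theta>s d - \<theta> 0 * \<theta>s (d - 1)) / (\<theta> 1 - \<theta> 0)"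
proof -
  let ?n = "d + 1"
  have d: "1 < ?n" "?n - 1 = d" "?n - 2 = d - 1" using d3 by auto
  obtain X Xi where X: "X \<in> carrier_mat ?n ?n" "Xi \<in> carrier_mat ?n ?n"
      "X * Xi = 1\<^sub>m ?n" "Xi * X = 1\<^sub>m ?n"
    and A_X: "A = X * mat_diag ?n \<theta> * Xi"
    and E: "\<And>i. i < ?n \<Longrightarrow> E i = X * diag_unit_mat ?n i * Xi"
    by (rule primitive_idempotents_diagonalize[OF A_carrier, of \<theta> E])
      (use eigval mult_free prim in \<open>simp_all add: less_Suc_eq_le\<close>)
  obtain P Pi Y where P: "P \<in> carrier_mat ?n ?n" "Pi \<in> carrier_mat ?n ?n"
      "P * Pi = 1\<^sub>m ?n" "Pi * P = 1\<^sub>m ?n"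
    and Y: "Y \<in> carrier_mat ?n ?n" and A_P: "A = P * Y * Pi"
    and Es: "\<And>i. i \<le> d \<Longrightarrow> Es i = P * diag_unit_mat ?n i * Pi"
    and As: "As = P * mat_diag ?n \<theta>s * Pi"
    using normalizing_basis_diagonalizes[OF Es_sys A_carrier normalizing] As_def by metis
  have Y_tri: "irreducible_bipartite_tridiagonal ?n Y"
    by (rule irreducible_bipartite_tridiagonal_conj[OF P(1,2) Y P(3,4) A_P, of Es])
      (use Es tridiag0 tridiag1 bipartite in \<open>simp_all add: less_Suc_eq_le\<close>)
  define T where "T = Xi * As * X"
  have As_carrier: "As \<in> carrier_mat ?n ?n" using As_def by (simp add: mat_lincomb_def)
  have T: "T \<in> carrier_mat ?n ?n" unfolding T_def using X As_carrier by auto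
  have "mat_trace (E 0 * As) = T $$ (0,0)"
    using mat_trace_conj_diag_unit_mult[OF As_carrier X, of 0] E[of 0] unfolding T_def by simp
  moreover have "T $$ (0,l) = 0" if "2 \<le> l" "l < ?n" for l
    using conj_diag_unit_sandwich_eq_zero_iff[OF As_carrier X, of 0 l] E[of 0] E[of l]
      nonadj[rule_format, of l] that
    unfolding T_def by simp
  moreover note eigen_coordinates_intertwine[OF P(1,2) X(1,2) Y P(3,4) X(3,4) A_P A_X As]
  ultimately show ?thesis
    using eigen_coordinates_trace_formulas[OF _ _ _ Y Y_tri T, of "Xi * P" "Pi * X" \<theta> \<theta>s]
      mult_free d X P
    unfolding T_def by (auto simp: less_Suc_eq_le)
qed

end
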